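(* Let $N=n+k$. The Bethe ansatz equations $$(-1)^n\frac{\Pi(y)}{(1+\beta y_i)^n}\prod_{j=1}^N y_i\ominus t_j+q=0,\qquad i=1,\dots,n,$$ for $y=(y_1,\dots,y_n)$ have $\binom{N}{n}$ pairwise distinct solutions $y_\lambda=(y_{\lambda_n+1},\dots,y_{\lambda_2+n-1},y_{\lambda_1+n})$, $\lambda\subset(k^n)$, whose components are formal power series in $q$ with coefficients rational functions of $t_1,\dots,t_N$ and $\beta$, and, for $i\in I_\lambda$, up to first order in $q$, $$y_i=t_i+q\,(-1)^{n-1}\frac{(1+\beta t_i)^{n+1}}{\Pi(t_\lambda)\prod_{j\neq i}t_i\ominus t_j}+O(q^2),$$ the product running over $j\in\{1,\dots,N\}\setminus\{i\}$.
   Context: $\beta$ indeterminate, $x\ominus y=(x-y)/(1+\beta y)$, $\Pi(y)=\prod_{i=1}^n(1+\beta y_i)$. For $\lambda\subset(k^n)$ (at most $n$ parts, each $\le k$), $I_\lambda=\{\lambda_{n+1-i}+i:1\le i\le n\}$ and $t_\lambda=(t_i)_{i\in I_\lambda}$, $\Pi(t_\lambda)=\prod_{i\in I_\lambda}(1+\beta t_i)$. *)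

theory Defs
  imports "HOL-Library.Poly_Mapping" "HOL-Computational_Algebra.Fraction_Field"
          "HOL-Computational_Algebra.Formal_Power_Series"
begin

text \<open>Polynomials over Q in the variables X_0, X_1, X_2, ... (X_0 plays the role of beta,
  X_i the role of t_i), and their field of fractions K.\<close>
type_synonym mpoly_q = "(nat \<Rightarrow>\<^sub>0 nat) \<Rightarrow>\<^sub>0 rat"
type_synonym ratfun = "mpoly_q fract"

definition Var :: "nat \<Rightarrow> mpoly_q" where
  "Var i = Poly_Mapping.single (Poly_Mapping.single i 1) 1"

definition beta :: ratfun where "beta = Fraction_Field.Fract (Var 0) 1"

definition tt :: "nat \<Rightarrow> ratfun" where "tt i = Fraction_Field.Fract (Var i) 1"

definition ratfun_in :: "nat \<Rightarrow> ratfun \<Rightarrow> bool" where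
  "ratfun_in N c \<longleftrightarrow> (\<exists>(p::mpoly_q) (r::mpoly_q). r \<noteq> 0 \<and> c = Fraction_Field.Fract p r \<and>
      (\<forall>m \<in> Poly_Mapping.keys p \<union> Poly_Mapping.keys r. Poly_Mapping.keys m \<subseteq> {0..N}))"

definition ominus :: "'a::{field} \<Rightarrow> 'a \<Rightarrow> 'a \<Rightarrow> 'a" where
  "ominus b x y = (x - y) / (1 + b * y)"

definition ominus_fps :: "'a::field fps \<Rightarrow> 'a fps \<Rightarrow> 'a fps \<Rightarrow> 'a fps" where
  "ominus_fps b x y = (x - y) / (1 + b * y)"

definition box_partitions :: "nat \<Rightarrow> nat \<Rightarrow> (nat \<Rightarrow> nat) set" where
  "box_partitions n k = {lam. (\<forall>j. (j = 0 \<or> j > n) \<longrightarrow> lam j = 0) \<and>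
      (\<forall>j\<in>{1..n}. lam j \<le> k) \<and> (\<forall>i\<in>{1..n}. \<forall>j\<in>{1..n}. i \<le> j \<longrightarrow> lam j \<le> lam i)}"

definition Iidx :: "nat \<Rightarrow> (nat \<Rightarrow> nat) \<Rightarrow> nat \<Rightarrow> nat" where
  "Iidx n lam j = lam (n + 1 - j) + j"

definition Iset :: "nat \<Rightarrow> (nat \<Rightarrow> nat) \<Rightarrow> nat set" where
  "Iset n lam = Iidx n lam ` {1..n}"

end

theory Submission
  imports Defs
begin

text \<open>
  Fix \<open>\<lambda>\<close> and write \<open>p(j) = i\<^sub>j\<close> for the indices in \<open>I\<^sub>\<lambda>\<close>. Splitting off the factor
  \<open>y\<^sub>j \<ominus> t\<^bsub>p(j)\<^esub>\<close>, which is the only one vanishing at \<open>q = 0\<close>, the \<open>j\<close>-th Bethe equation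
  becomes \<open>y\<^sub>j = t\<^bsub>p(j)\<^esub> - q / G\<^sub>j(y)\<close> where \<open>G\<^sub>j(y)\<close> has a nonzero constant term as soon
  as \<open>y(0) = t\<^sub>p\<close>. The right-hand side gains one order of \<open>q\<close>-adic agreement, so its iterates,
  started at \<open>t\<^sub>p\<close>, converge coefficientwise to a solution; its \<open>q\<close>-coefficient is
  \<open>-1 / G\<^sub>j(t\<^sub>p)\<close>, the stated first-order term, and every coefficient is produced by field
  operations from \<open>\<beta>, t\<^sub>1, \<dots>, t\<^sub>N\<close>. Different partitions have different index sets, hence
  solutions with different constant terms. A partition in the \<open>n \<times> k\<close> box either has
  \<open>\<lambda>\<^sub>n = 0\<close> or arises from one in the \<open>n \<times> (k-1)\<close> box by adding a full column, which is
  Pascal's recurrence for \<open>(n + k choose n)\<close>.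
\<close>

unbundle fps_syntax

locale subfield_predicate =
  fixes P :: "'a::field \<Rightarrow> bool"
  assumes zero [intro]: "P 0" and one [intro]: "P 1"
    and add [intro]: "P a \<Longrightarrow> P b \<Longrightarrow> P (a + b)"
    and uminus [intro]: "P a \<Longrightarrow> P (- a)"
    and mult [intro]: "P a \<Longrightarrow> P b \<Longrightarrow> P (a * b)"
    and inverse [intro]: "P a \<Longrightarrow> P (inverse a)"
begin

lemma sum [intro]: "(\<And>x. x \<in> A \<Longrightarrow> P (f x)) \<Longrightarrow> P (sum f A)"
  by (induction A rule: infinite_finite_induct) auto

definition fps_in :: "'a fps \<Rightarrow> bool" where
  "fps_in f \<longleftrightarrow> (\<forall>t. P (f $ t))"

lemma fps_in_const [intro]: "P c \<Longrightarrow> fps_in (fps_const c)"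
  by (auto simp: fps_in_def)

lemma fps_in_1 [intro]: "fps_in 1"
  by (auto simp: fps_in_def)

lemma fps_in_X [intro]: "fps_in fps_X"
  by (auto simp: fps_in_def fps_X_def)

lemma fps_in_add [intro]: "fps_in f \<Longrightarrow> fps_in g \<Longrightarrow> fps_in (f + g)"
  by (auto simp: fps_in_def)

lemma fps_in_uminus [intro]: "fps_in f \<Longrightarrow> fps_in (- f)"
  by (auto simp: fps_in_def)

lemma fps_in_diff [intro]: "fps_in f \<Longrightarrow> fps_in g \<Longrightarrow> fps_in (f - g)"
  by (metis diff_conv_add_uminus fps_in_add fps_in_uminus)

lemma fps_in_mult [intro]: "fps_in f \<Longrightarrow> fps_in g \<Longrightarrow> fps_in (f * g)"
  by (auto simp: fps_in_def fps_mult_nth)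

lemma fps_in_prod [intro]: "(\<And>x. x \<in> A \<Longrightarrow> fps_in (f x)) \<Longrightarrow> fps_in (prod f A)"
  by (induction A rule: infinite_finite_induct) auto

lemma fps_in_power [intro]: "fps_in f \<Longrightarrow> fps_in (f ^ k)"
  by (induction k) auto

lemma fps_in_inverse [intro]:
  assumes f: "fps_in f"
  shows "fps_in (inverse f)"
proof -
  have coeff: "P (f $ i)" for i
    using f by (simp add: fps_in_def)
  have "P (natfun_inverse f t)" for t
  proof (induction t rule: less_induct)
    case (less t)
    show ?case
    proof (cases t)
      case (Suc s)
      have "P (\<Sum>i=1..t. f $ i * natfun_inverse f (t - i))"
        by (rule sum, rule mult, rule coeff, rule less.IH) (use Suc in auto)
      with Suc show ?thesis
        by (simp del: fps_right_inverse_constructor.simps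
            add: fps_right_inverse_constructor.simps(2) mult uminus inverse coeff)
    qed (simp add: coeff inverse)
  qed
  then show ?thesis
    by (simp add: fps_in_def fps_inverse_def)
qed

end

lemma fps_prod_nth_0: "prod f A $ 0 = (\<Prod>x\<in>A. f x $ 0)"
  by (induction A rule: infinite_finite_induct) auto

lemma fps_cutoff_mono:
  "fps_cutoff m f = fps_cutoff m g \<Longrightarrow> m' \<le> m \<Longrightarrow> fps_cutoff m' f = fps_cutoff m' g"
  by (simp add: fps_cutoff_eq_fps_cutoff_iff)

lemma fps_cutoff_add_cong:
  "fps_cutoff m f = fps_cutoff m f' \<Longrightarrow> fps_cutoff m g = fps_cutoff m g' \<Longrightarrow>
   fps_cutoff m (f + g :: 'a::monoid_add fps) = fps_cutoff m (f' + g')"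
  by (simp add: fps_cutoff_add)

lemma fps_cutoff_diff_cong:
  "fps_cutoff m f = fps_cutoff m f' \<Longrightarrow> fps_cutoff m g = fps_cutoff m g' \<Longrightarrow>
   fps_cutoff m (f - g :: 'a::group_add fps) = fps_cutoff m (f' - g')"
  by (simp add: fps_cutoff_diff)

lemma fps_cutoff_mult_cong:
  fixes f g f' g' :: "'a::comm_ring_1 fps"
  assumes "fps_cutoff m f = fps_cutoff m f'" "fps_cutoff m g = fps_cutoff m g'"
  shows "fps_cutoff m (f * g) = fps_cutoff m (f' * g')"
proof -
  have "(f * g) $ k = (f' * g') $ k" if k: "k < m" for k
  proof -
    have "(f * g) $ k = (fps_cutoff m f' * g) $ k"
      using fps_cutoff_left_mult_nth[OF k, of f g] assms(1) by simp
    also have "\<dots> = (f' * fps_cutoff m g') $ k"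
      using fps_cutoff_left_mult_nth[OF k, of f' g] fps_cutoff_right_mult_nth[OF k, of f' g] assms(2)
      by simp
    finally show ?thesis
      using fps_cutoff_right_mult_nth[OF k, of f' g'] by simp
  qed
  then show ?thesis
    by (simp add: fps_cutoff_eq_fps_cutoff_iff)
qed

lemma fps_cutoff_prod_cong:
  "(\<And>x. x \<in> A \<Longrightarrow> fps_cutoff m (f x) = fps_cutoff m (g x)) \<Longrightarrow>
   fps_cutoff m (prod f A :: 'a::comm_ring_1 fps) = fps_cutoff m (prod g A)"
proof (induction A rule: infinite_finite_induct)
  case (insert x F)
  then show ?case
    using fps_cutoff_mult_cong[of m "f x" "g x" "prod f F" "prod g F"] by simp
qed simp_all

lemma fps_cutoff_power_cong:
  "fps_cutoff m f = fps_cutoff m g \<Longrightarrow> fps_cutoff m (f ^ k :: 'a::comm_ring_1 fps) = fps_cutoff m (g ^ k)"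
proof (induction k)
  case (Suc k)
  then show ?case
    using fps_cutoff_mult_cong[of m f g "f ^ k" "g ^ k"] by simp
qed simp

lemma fps_cutoff_inverse_cong:
  fixes f g :: "'a::field fps"
  assumes "fps_cutoff m f = fps_cutoff m g" and "f $ 0 \<noteq> 0" "g $ 0 \<noteq> 0"
  shows "fps_cutoff m (inverse f) = fps_cutoff m (inverse g)"
  using fps_cutoff_inverse[of f m] fps_cutoff_inverse[of g m] assms by simp

lemma fps_cutoff_X_mult_cong:
  "fps_cutoff m f = fps_cutoff m g \<Longrightarrow>
   fps_cutoff (Suc m) (fps_X * f) = fps_cutoff (Suc m) (fps_X * g :: 'a::comm_ring_1 fps)"
  unfolding fps_cutoff_eq_fps_cutoff_iff by (auto simp: less_Suc_eq_0_disj)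

definition iterate_limit :: "(('i \<Rightarrow> 'a::zero fps) \<Rightarrow> 'i \<Rightarrow> 'a fps) \<Rightarrow> ('i \<Rightarrow> 'a fps) \<Rightarrow> 'i \<Rightarrow> 'a fps" where
  "iterate_limit \<Phi> y i = Abs_fps (\<lambda>t. (\<Phi> ^^ Suc t) y i $ t)"

lemma iterate_limit_nth: "iterate_limit \<Phi> y i $ t = (\<Phi> ^^ Suc t) y i $ t"
  by (simp add: iterate_limit_def)

lemma iterate_limit_fixpoint:
  fixes \<Phi> :: "('i \<Rightarrow> 'a::comm_ring_1 fps) \<Rightarrow> 'i \<Rightarrow> 'a fps"
  assumes const: "\<And>y i. i \<in> A \<Longrightarrow> \<Phi> y i $ 0 = c i"
    and contract: "\<And>y z m. \<forall>i\<in>A. y i $ 0 = c i \<Longrightarrow> \<forall>i\<in>A. z i $ 0 = c i \<Longrightarrow>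
        \<forall>i\<in>A. fps_cutoff m (y i) = fps_cutoff m (z i) \<Longrightarrow>
        \<forall>i\<in>A. fps_cutoff (Suc m) (\<Phi> y i) = fps_cutoff (Suc m) (\<Phi> z i)"
    and y0: "\<forall>i\<in>A. y0 i $ 0 = c i" and i: "i \<in> A"
  shows "iterate_limit \<Phi> y0 i = \<Phi> (iterate_limit \<Phi> y0) i"
proof -
  let ?y = "\<lambda>m. (\<Phi> ^^ m) y0" and ?L = "iterate_limit \<Phi> y0"
  have y_const: "\<forall>i\<in>A. ?y m i $ 0 = c i" for m
    using y0 const by (cases m) auto
  have agree_next: "\<forall>i\<in>A. fps_cutoff m (?y m i) = fps_cutoff m (?y (Suc m) i)" for m
  proof (induction m)
    case (Suc m)
    then show ?case
      using contract[OF y_const y_const Suc.IH] by simp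
  qed simp
  have stable: "fps_cutoff m (?y m i) = fps_cutoff m (?y m' i)" if "m \<le> m'" "i \<in> A" for m m' i
    using that(1)
  proof (induction m' rule: dec_induct)
    case (step m')
    then show ?case
      using fps_cutoff_mono[OF agree_next[rule_format, OF \<open>i \<in> A\<close>, of m'], of m] by simp
  qed simp
  have L_cutoff: "\<forall>i\<in>A. fps_cutoff m (?L i) = fps_cutoff m (?y m i)" for m
    using stable[of "Suc _" m] by (auto simp: fps_cutoff_eq_fps_cutoff_iff iterate_limit_nth)
  have L_const: "\<forall>i\<in>A. ?L i $ 0 = c i"
    using y_const[of 1] by (simp add: iterate_limit_nth)
  have "fps_cutoff (Suc t) (?L i) = fps_cutoff (Suc t) (\<Phi> ?L i)" for t
    using L_cutoff[of "Suc t"] contract[OF L_const y_const L_cutoff[of t]] i by simp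
  then show ?thesis
    by (metis fps_cutoff_eq_fps_cutoff_iff fps_ext lessI)
qed

locale bethe_equations =
  fixes b :: "'a::field" and t :: "nat \<Rightarrow> 'a" and N :: nat
  assumes inj_t: "inj_on t {1..N}"
    and one_plus_b_t_nonzero: "j \<in> {1..N} \<Longrightarrow> 1 + b * t j \<noteq> 0"
begin

abbreviation (input) B :: "'a fps" where "B \<equiv> fps_const b"
abbreviation (input) T :: "nat \<Rightarrow> 'a fps" where "T j \<equiv> fps_const (t j)"

definition bethe_lhs :: "nat \<Rightarrow> (nat \<Rightarrow> 'a fps) \<Rightarrow> nat \<Rightarrow> 'a fps" where
  "bethe_lhs n y i = (-1) ^ n * (\<Prod>l\<in>{1..n}. 1 + B * y l) / (1 + B * y i) ^ n
     * (\<Prod>j\<in>{1..N}. ominus_fps B (y i) (T j))"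

text \<open>The \<open>G\<close> of the proof idea; \<open>y i\<close> is the deformation of \<open>t (p i)\<close>.\<close>
definition cofactor :: "nat \<Rightarrow> (nat \<Rightarrow> nat) \<Rightarrow> (nat \<Rightarrow> 'a fps) \<Rightarrow> nat \<Rightarrow> 'a fps" where
  "cofactor n p y i = (-1) ^ n * (\<Prod>l\<in>{1..n}. 1 + B * y l) * inverse ((1 + B * y i) ^ n)
     * (\<Prod>j\<in>{1..N} - {p i}. (y i - T j) * inverse (1 + B * T j)) * inverse (1 + B * T (p i))"

definition bethe_step :: "nat \<Rightarrow> (nat \<Rightarrow> nat) \<Rightarrow> (nat \<Rightarrow> 'a fps) \<Rightarrow> nat \<Rightarrow> 'a fps" where
  "bethe_step n p y i = T (p i) - fps_X * inverse (cofactor n p y i)"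

definition solution :: "nat \<Rightarrow> (nat \<Rightarrow> nat) \<Rightarrow> nat \<Rightarrow> 'a fps" where
  "solution n p = iterate_limit (bethe_step n p) (\<lambda>i. T (p i))"

lemma bethe_lhs_eq:
  assumes "p i \<in> {1..N}" "y i $ 0 = t (p i)"
  shows "bethe_lhs n y i = cofactor n p y i * (y i - T (p i))"
proof -
  have "(\<Prod>j\<in>{1..N}. ominus_fps B (y i) (T j)) = (\<Prod>j\<in>{1..N}. (y i - T j) * inverse (1 + B * T j))"
    unfolding ominus_fps_def by (intro prod.cong refl fps_divide_unit) (simp add: one_plus_b_t_nonzero)
  also have "\<dots> = (y i - T (p i)) * inverse (1 + B * T (p i))
      * (\<Prod>j\<in>{1..N} - {p i}. (y i - T j) * inverse (1 + B * T j))"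
    using assms(1) by (simp add: prod.remove)
  finally show ?thesis
    unfolding bethe_lhs_def cofactor_def
    using assms one_plus_b_t_nonzero by (simp add: fps_divide_unit fps_power_zeroth ac_simps)
qed

lemma cofactor_nth_0:
  assumes p: "p ` {1..n} \<subseteq> {1..N}" and y: "\<forall>l\<in>{1..n}. y l $ 0 = t (p l)" and i: "i \<in> {1..n}"
  shows "cofactor n p y i $ 0 = (-1) ^ n * (\<Prod>l\<in>{1..n}. 1 + b * t (p l)) / (1 + b * t (p i)) ^ n
     * (\<Prod>j\<in>{1..N} - {p i}. ominus b (t (p i)) (t j)) / (1 + b * t (p i))"
  using y i unfolding cofactor_def ominus_def
  by (simp add: fps_prod_nth_0 fps_power_zeroth divide_inverse)

lemma ominus_t_nonzero:
  assumes "j \<in> {1..N}" "k \<in> {1..N}" "j \<noteq> k"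
  shows "ominus b (t k) (t j) \<noteq> 0"
  using assms inj_onD[OF inj_t] one_plus_b_t_nonzero by (fastforce simp: ominus_def)

lemma cofactor_nth_0_nonzero:
  assumes p: "p ` {1..n} \<subseteq> {1..N}" and y: "\<forall>l\<in>{1..n}. y l $ 0 = t (p l)" and i: "i \<in> {1..n}"
  shows "cofactor n p y i $ 0 \<noteq> 0"
proof -
  have "p l \<in> {1..N}" if "l \<in> {1..n}" for l
    using p that by blast
  then show ?thesis
    unfolding cofactor_nth_0[OF assms] using i one_plus_b_t_nonzero ominus_t_nonzero by simp
qed

lemma cofactor_cutoff_cong:
  assumes p: "p ` {1..n} \<subseteq> {1..N}"
    and y: "\<forall>l\<in>{1..n}. y l $ 0 = t (p l)" and z: "\<forall>l\<in>{1..n}. z l $ 0 = t (p l)"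
    and yz: "\<forall>l\<in>{1..n}. fps_cutoff m (y l) = fps_cutoff m (z l)" and i: "i \<in> {1..n}"
  shows "fps_cutoff m (cofactor n p y i) = fps_cutoff m (cofactor n p z i)"
proof -
  have "1 + b * t (p i) \<noteq> 0"
    using p i one_plus_b_t_nonzero by blast
  then have unit: "(1 + B * y i) ^ n $ 0 \<noteq> 0" "(1 + B * z i) ^ n $ 0 \<noteq> 0"
    using y z i by (simp_all add: fps_power_zeroth)
  have yz_i: "fps_cutoff m (y i) = fps_cutoff m (z i)"
    using yz i by blast
  have "fps_cutoff m (\<Prod>l\<in>{1..n}. 1 + B * y l) = fps_cutoff m (\<Prod>l\<in>{1..n}. 1 + B * z l)"
    using yz by (intro fps_cutoff_prod_cong fps_cutoff_add_cong[OF refl] fps_cutoff_mult_cong[OF refl]) auto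
  moreover have "fps_cutoff m (inverse ((1 + B * y i) ^ n)) = fps_cutoff m (inverse ((1 + B * z i) ^ n))"
    using fps_cutoff_power_cong[OF fps_cutoff_add_cong[OF refl fps_cutoff_mult_cong[OF refl yz_i]]]
    by (rule fps_cutoff_inverse_cong[OF _ unit])
  moreover have "fps_cutoff m (\<Prod>j\<in>{1..N} - {p i}. (y i - T j) * inverse (1 + B * T j))
      = fps_cutoff m (\<Prod>j\<in>{1..N} - {p i}. (z i - T j) * inverse (1 + B * T j))"
    by (intro fps_cutoff_prod_cong fps_cutoff_mult_cong[OF fps_cutoff_diff_cong[OF yz_i refl] refl])
  ultimately show ?thesis
    unfolding cofactor_def by (intro fps_cutoff_mult_cong refl)
qed

lemma bethe_step_contract:
  assumes p: "p ` {1..n} \<subseteq> {1..N}"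
    and y: "\<forall>l\<in>{1..n}. y l $ 0 = t (p l)" and z: "\<forall>l\<in>{1..n}. z l $ 0 = t (p l)"
    and yz: "\<forall>l\<in>{1..n}. fps_cutoff m (y l) = fps_cutoff m (z l)"
  shows "\<forall>i\<in>{1..n}. fps_cutoff (Suc m) (bethe_step n p y i) = fps_cutoff (Suc m) (bethe_step n p z i)"
  unfolding bethe_step_def
  using fps_cutoff_X_mult_cong[OF fps_cutoff_inverse_cong[OF cofactor_cutoff_cong[OF p y z yz]
      cofactor_nth_0_nonzero[OF p y] cofactor_nth_0_nonzero[OF p z]]]
  by (simp add: fps_cutoff_diff)

lemma bethe_step_nth_0: "bethe_step n p y i $ 0 = t (p i)"
  by (simp add: bethe_step_def)

lemma solution_nth_0: "solution n p i $ 0 = t (p i)"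
  by (simp only: solution_def iterate_limit_nth funpow.simps comp_apply bethe_step_nth_0)

lemma solution_fixpoint:
  assumes p: "p ` {1..n} \<subseteq> {1..N}" and i: "i \<in> {1..n}"
  shows "solution n p i = T (p i) - fps_X * inverse (cofactor n p (solution n p) i)"
proof -
  have "solution n p i = bethe_step n p (solution n p) i"
    unfolding solution_def
    by (rule iterate_limit_fixpoint[where c = "\<lambda>i. t (p i)", OF bethe_step_nth_0
          bethe_step_contract[OF p] _ i]) auto
  then show ?thesis
    by (simp only: bethe_step_def)
qed

lemma solution_solves:
  assumes p: "p ` {1..n} \<subseteq> {1..N}" and i: "i \<in> {1..n}"
  shows "bethe_lhs n (solution n p) i + fps_X = 0"
proof -
  let ?G = "cofactor n p (solution n p) i"
  have "?G $ 0 \<noteq> 0"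
    using cofactor_nth_0_nonzero[OF p _ i] by (simp add: solution_nth_0)
  moreover have "bethe_lhs n (solution n p) i = ?G * (solution n p i - T (p i))"
    using p i by (intro bethe_lhs_eq) (blast, simp add: solution_nth_0)
  ultimately show ?thesis
    using solution_fixpoint[OF p i] by (simp add: inverse_mult_eq_1')
qed

lemma solution_nth_1:
  assumes p: "p ` {1..n} \<subseteq> {1..N}" and i: "i \<in> {1..n}"
  shows "solution n p i $ 1 = - inverse (cofactor n p (solution n p) i $ 0)"
  by (subst solution_fixpoint[OF p i]) simp

lemma solution_coeffs_in:
  assumes P: "subfield_predicate P" and "P b" and "\<And>j. j \<in> {1..N} \<Longrightarrow> P (t j)"
    and p: "p ` {1..n} \<subseteq> {1..N}" and i: "i \<in> {1..n}"
  shows "P (solution n p i $ k)"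
proof -
  interpret subfield_predicate P by (rule P)
  have T: "fps_in (T j)" if "j \<in> {1..N}" for j
    using assms(3)[OF that] by blast
  have step: "fps_in (bethe_step n p y i)"
    if y: "\<forall>l\<in>{1..n}. fps_in (y l)" and i: "i \<in> {1..n}" for y i
  proof -
    have "p i \<in> {1..N}"
      using p i by blast
    then show ?thesis
      unfolding bethe_step_def cofactor_def using y i \<open>P b\<close>
      by (intro fps_in_diff fps_in_mult fps_in_inverse fps_in_prod fps_in_power fps_in_add fps_in_uminus
          fps_in_1 fps_in_X fps_in_const T) auto
  qed
  have "\<forall>l\<in>{1..n}. fps_in ((bethe_step n p ^^ m) (\<lambda>i. T (p i)) l)" for m
  proof (induction m)
    case 0
    show ?case using p T by auto
  next
    case (Suc m)
    then show ?case
      using step by simp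
  qed
  then show ?thesis
    using i unfolding solution_def iterate_limit_nth fps_in_def by blast
qed

lemma solution_first_order:
  assumes p: "p ` {1..n} \<subseteq> {1..N}" "inj_on p {1..n}" and i: "i \<in> {1..n}"
  shows "solution n p i $ 1 = (-1) ^ (n - 1) * (1 + b * t (p i)) ^ (n + 1)
      / ((\<Prod>i'\<in>p ` {1..n}. 1 + b * t i') * (\<Prod>j\<in>{1..N} - {p i}. ominus b (t (p i)) (t j)))"
proof -
  obtain m where n: "n = Suc m"
    using i by (cases n) auto
  define D where "D = 1 + b * t (p i)"
  define P where "P = (\<Prod>i'\<in>p ` {1..n}. 1 + b * t i')"
  define Q where "Q = (\<Prod>j\<in>{1..N} - {p i}. ominus b (t (p i)) (t j))"
  have "p i \<in> {1..N}"
    using p(1) i by blast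
  then have nonzero: "D \<noteq> 0" "P \<noteq> 0" "Q \<noteq> 0"
    using p(1) one_plus_b_t_nonzero ominus_t_nonzero unfolding D_def P_def Q_def by auto
  have cofactor_0: "cofactor n p (solution n p) i $ 0 = (-1) ^ n * P / D ^ n * Q / D"
    using cofactor_nth_0[OF p(1) _ i, of "solution n p"]
    unfolding P_def prod.reindex[OF p(2)] by (simp add: solution_nth_0 D_def Q_def)
  have sign: "(-1::'a) ^ m * (-1) ^ m = 1"
    by (simp add: power_mult_distrib[symmetric])
  show ?thesis
    unfolding solution_nth_1[OF p(1) i] cofactor_0 D_def[symmetric] P_def[symmetric] Q_def[symmetric]
    using nonzero sign by (simp add: n field_simps)
qed

end

definition poly_in_vars :: "nat \<Rightarrow> mpoly_q \<Rightarrow> bool" where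
  "poly_in_vars N p \<longleftrightarrow> (\<forall>m \<in> Poly_Mapping.keys p. Poly_Mapping.keys m \<subseteq> {0..N})"

lemma poly_in_vars_0 [simp]: "poly_in_vars N 0"
  and poly_in_vars_1 [simp]: "poly_in_vars N 1"
  by (simp_all add: poly_in_vars_def)

lemma poly_in_vars_Var: "i \<le> N \<Longrightarrow> poly_in_vars N (Var i)"
  by (simp add: poly_in_vars_def Var_def)

lemma poly_in_vars_add: "poly_in_vars N p \<Longrightarrow> poly_in_vars N q \<Longrightarrow> poly_in_vars N (p + q)"
  unfolding poly_in_vars_def using keys_add[of p q] by blast

lemma poly_in_vars_uminus: "poly_in_vars N p \<Longrightarrow> poly_in_vars N (- p)"
  by (simp add: poly_in_vars_def)

lemma poly_in_vars_mult:
  assumes "poly_in_vars N p" "poly_in_vars N q"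
  shows "poly_in_vars N (p * q)"
  unfolding poly_in_vars_def
proof
  fix m assume "m \<in> Poly_Mapping.keys (p * q)"
  then obtain a c where "m = a + c" "a \<in> Poly_Mapping.keys p" "c \<in> Poly_Mapping.keys q"
    using keys_mult[of p q] by blast
  then show "Poly_Mapping.keys m \<subseteq> {0..N}"
    using assms keys_add[of a c] unfolding poly_in_vars_def by blast
qed

lemma ratfun_in_iff:
  "ratfun_in N c \<longleftrightarrow> (\<exists>p r. r \<noteq> 0 \<and> c = Fraction_Field.Fract p r \<and> poly_in_vars N p \<and> poly_in_vars N r)"
  unfolding ratfun_in_def poly_in_vars_def by blast

lemma ratfun_in_Fract: "r \<noteq> 0 \<Longrightarrow> poly_in_vars N p \<Longrightarrow> poly_in_vars N r \<Longrightarrow> ratfun_in N (Fraction_Field.Fract p r)"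
  unfolding ratfun_in_iff by blast

interpretation ratfun_in: subfield_predicate "ratfun_in N" for N
proof
  show "ratfun_in N 0" "ratfun_in N 1"
    by (auto simp: Zero_fract_def One_fract_def intro: ratfun_in_Fract)
  fix a c assume "ratfun_in N a" "ratfun_in N c"
  then obtain p r p' r' where "r \<noteq> 0" "a = Fraction_Field.Fract p r" "poly_in_vars N p" "poly_in_vars N r"
    "r' \<noteq> 0" "c = Fraction_Field.Fract p' r'" "poly_in_vars N p'" "poly_in_vars N r'"
    unfolding ratfun_in_iff by blast
  then show "ratfun_in N (a + c)" "ratfun_in N (a * c)"
    by (auto intro!: ratfun_in_Fract poly_in_vars_add poly_in_vars_mult)
next
  fix a assume "ratfun_in N a"
  then obtain p r where a: "r \<noteq> 0" "a = Fraction_Field.Fract p r" "poly_in_vars N p" "poly_in_vars N r"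
    unfolding ratfun_in_iff by blast
  then show "ratfun_in N (- a)"
    by (auto intro!: ratfun_in_Fract poly_in_vars_uminus)
  show "ratfun_in N (inverse a)"
  proof (cases "p = 0")
    case True
    with a have "inverse a = Fraction_Field.Fract 0 1"
      by (simp add: eq_fract)
    then show ?thesis
      by (simp add: ratfun_in_Fract)
  next
    case False
    with a show ?thesis
      by (auto intro: ratfun_in_Fract)
  qed
qed

lemma ratfun_in_beta: "ratfun_in N beta"
  unfolding beta_def by (rule ratfun_in_Fract) (simp_all add: poly_in_vars_Var)

lemma ratfun_in_tt: "i \<le> N \<Longrightarrow> ratfun_in N (tt i)"
  unfolding tt_def by (rule ratfun_in_Fract) (simp_all add: poly_in_vars_Var)

lemma Var_inj: "Var i = Var j \<Longrightarrow> i = j"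
  unfolding Var_def by (metis inj_single injD lookup_single_eq lookup_single_not_eq zero_neq_one)

lemma inj_tt: "inj tt"
  by (rule injI) (simp add: tt_def eq_fract Var_inj)

lemma one_plus_beta_tt_nonzero: "1 + beta * tt i \<noteq> 0"
proof \<comment> \<open>the polynomial \<open>1 + X\<^sub>0 X\<^sub>i\<close> has constant term 1\<close>
  assume "1 + beta * tt i = 0"
  then have "1 + Var 0 * Var i = 0"
    by (simp add: beta_def tt_def One_fract_def eq_fract Zero_fract_def)
  then have "Poly_Mapping.lookup (1 + Var 0 * Var i) 0 = 0"
    by simp
  moreover have "Poly_Mapping.single 0 1 + Poly_Mapping.single i 1 \<noteq> (0 :: nat \<Rightarrow>\<^sub>0 nat)"
    by (metis add_is_0 lookup_add lookup_single_eq lookup_zero one_neq_zero)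
  ultimately show False
    by (simp add: Var_def mult_single lookup_add lookup_single)
qed

interpretation ratfun: bethe_equations beta tt N for N
  by unfold_locales (simp_all add: inj_on_subset[OF inj_tt subset_UNIV] one_plus_beta_tt_nonzero)

definition add_column :: "nat \<Rightarrow> (nat \<Rightarrow> nat) \<Rightarrow> nat \<Rightarrow> nat" where
  "add_column n mu j = (if j \<in> {1..n} then Suc (mu j) else 0)"

lemma box_partitions_outside: "lam \<in> box_partitions n k \<Longrightarrow> j \<notin> {1..n} \<Longrightarrow> lam j = 0"
  by (auto simp: box_partitions_def not_less_eq_eq)

lemma box_partitions_le: "lam \<in> box_partitions n k \<Longrightarrow> j \<in> {1..n} \<Longrightarrow> lam j \<le> k"
  by (simp add: box_partitions_def)

lemma box_partitions_antimono:
  "lam \<in> box_partitions n k \<Longrightarrow> i \<in> {1..n} \<Longrightarrow> j \<in> {1..n} \<Longrightarrow> i \<le> j \<Longrightarrow> lam j \<le> lam i"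
  by (simp add: box_partitions_def)

lemma box_partitions_0_left: "box_partitions 0 k = {\<lambda>_. 0}"
  by (auto simp: box_partitions_def)

lemma box_partitions_0_right: "box_partitions n 0 = {\<lambda>_. 0}"
  by (auto simp: box_partitions_def) (metis atLeastAtMost_iff le_zero_eq not_less not_less_eq_eq)

lemma box_partitions_last_zero:
  "{lam \<in> box_partitions (Suc a) k. lam (Suc a) = 0} = box_partitions a k"
  by (auto simp: box_partitions_def le_Suc_eq) (metis Suc_lessI)

lemma box_partitions_last_nonzero:
  "{lam \<in> box_partitions (Suc a) (Suc b). lam (Suc a) \<noteq> 0} = add_column (Suc a) ` box_partitions (Suc a) b"
proof (intro set_eqI iffI)
  fix lam assume "lam \<in> {lam \<in> box_partitions (Suc a) (Suc b). lam (Suc a) \<noteq> 0}"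
  then have lam: "lam \<in> box_partitions (Suc a) (Suc b)" and last: "lam (Suc a) \<noteq> 0"
    by auto
  define mu where "mu j = (if j \<in> {1..Suc a} then lam j - 1 else 0)" for j
  have "0 < lam j" if "j \<in> {1..Suc a}" for j
    using box_partitions_antimono[OF lam that, of "Suc a"] last that by auto
  then have "lam = add_column (Suc a) mu"
    using box_partitions_outside[OF lam] by (auto simp: add_column_def mu_def fun_eq_iff)
  moreover have "mu \<in> box_partitions (Suc a) b"
    using lam box_partitions_antimono[OF lam] unfolding box_partitions_def mu_def
    by (auto intro: diff_le_mono)
  ultimately show "lam \<in> add_column (Suc a) ` box_partitions (Suc a) b"
    by blast
qed (auto simp: box_partitions_def add_column_def)

lemma inj_on_add_column: "inj_on (add_column n) (box_partitions n k)"
proof (rule inj_onI)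
  fix mu nu assume mu: "mu \<in> box_partitions n k" and nu: "nu \<in> box_partitions n k"
    and eq: "add_column n mu = add_column n nu"
  have "mu j = nu j" if "j \<in> {1..n}" for j
    using fun_cong[OF eq, of j] that by (simp add: add_column_def)
  then show "mu = nu"
    using box_partitions_outside[OF mu] box_partitions_outside[OF nu] by fastforce
qed

lemma box_partitions_card_finite:
  "finite (box_partitions n k) \<and> card (box_partitions n k) = (n + k) choose n"
proof (induction n arbitrary: k)
  case 0
  then show ?case by (simp add: box_partitions_0_left)
next
  case (Suc a)
  note fewer_rows = Suc.IH
  show ?case
  proof (induction k)
    case 0
    then show ?case by (simp add: box_partitions_0_right)
  next
    case (Suc b)
    let ?B = "box_partitions (Suc a) (Suc b)"
    let ?S = "box_partitions a (Suc b)" and ?T = "add_column (Suc a) ` box_partitions (Suc a) b"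
    have "?B = {lam \<in> ?B. lam (Suc a) = 0} \<union> {lam \<in> ?B. lam (Suc a) \<noteq> 0}"
      and "{lam \<in> ?B. lam (Suc a) = 0} \<inter> {lam \<in> ?B. lam (Suc a) \<noteq> 0} = {}"
      by blast+
    then have split: "?B = ?S \<union> ?T" and disjoint: "?S \<inter> ?T = {}"
      unfolding box_partitions_last_zero box_partitions_last_nonzero .
    have S: "finite ?S" "card ?S = (a + Suc b) choose a"
      using fewer_rows by blast+
    have T: "finite ?T" "card ?T = (Suc a + b) choose Suc a"
      using Suc.IH card_image[OF inj_on_add_column] by auto
    show ?case
      unfolding split card_Un_disjoint[OF S(1) T(1) disjoint] S T using S(1) T(1) by simp
  qed
qed

lemma Iidx_range:
  assumes lam: "lam \<in> box_partitions n k" and j: "j \<in> {1..n}"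
  shows "Iidx n lam j \<in> {1..n + k}"
proof -
  have "n + 1 - j \<in> {1..n}"
    using j by auto
  then have "lam (n + 1 - j) \<le> k"
    by (rule box_partitions_le[OF lam])
  then show ?thesis
    using j by (simp add: Iidx_def)
qed

lemma Iidx_strict_mono:
  assumes lam: "lam \<in> box_partitions n k" and "i \<in> {1..n}" "j \<in> {1..n}" "i < j"
  shows "Iidx n lam i < Iidx n lam j"
proof -
  have "lam (n + 1 - i) \<le> lam (n + 1 - j)"
    by (rule box_partitions_antimono[OF lam]) (use assms in auto)
  then show ?thesis
    using \<open>i < j\<close> by (simp add: Iidx_def)
qed

lemma inj_on_Iidx: "lam \<in> box_partitions n k \<Longrightarrow> inj_on (Iidx n lam) {1..n}"
  by (rule inj_onI) (metis Iidx_strict_mono less_irrefl nat_neq_iff)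

lemma Iidx_eq_imp_eq:
  assumes lam: "lam \<in> box_partitions n k" and mu: "mu \<in> box_partitions n k"
    and eq: "\<forall>j\<in>{1..n}. Iidx n lam j = Iidx n mu j"
  shows "lam = mu"
proof
  fix j show "lam j = mu j"
  proof (cases "j \<in> {1..n}")
    case True
    then have "n + 1 - j \<in> {1..n}" "n + 1 - (n + 1 - j) = j"
      by auto
    then show ?thesis
      using eq unfolding Iidx_def by (metis add_right_cancel)
  qed (simp add: box_partitions_outside[OF lam] box_partitions_outside[OF mu])
qed

theorem mainTheorem8:
  fixes n k N :: nat
  assumes "N = n + k"
  shows "card (box_partitions n k) = N choose n \<and>
    (\<exists>Y :: (nat \<Rightarrow> nat) \<Rightarrow> nat \<Rightarrow> ratfun fps.
      (\<forall>lam \<in> box_partitions n k.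
         (\<forall>j\<in>{1..n}. \<forall>m. ratfun_in N (fps_nth (Y lam j) m)) \<and>
         (\<forall>i\<in>{1..n}.
            (-1) ^ n * (\<Prod>l\<in>{1..n}. 1 + fps_const beta * Y lam l)
              / (1 + fps_const beta * Y lam i) ^ n
              * (\<Prod>j\<in>{1..N}. ominus_fps (fps_const beta) (Y lam i) (fps_const (tt j)))
            + fps_X = 0) \<and>
         (\<forall>j\<in>{1..n}.
            fps_nth (Y lam j) 0 = tt (Iidx n lam j) \<and>
            fps_nth (Y lam j) 1 =
              (-1) ^ (n - 1) * (1 + beta * tt (Iidx n lam j)) ^ (n + 1)
              / ((\<Prod>i'\<in>Iset n lam. 1 + beta * tt i') *
                 (\<Prod>j'\<in>{1..N} - {Iidx n lam j}. ominus beta (tt (Iidx n lam j)) (tt j'))))) \<and>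
      (\<forall>lam1 \<in> box_partitions n k. \<forall>lam2 \<in> box_partitions n k.
         lam1 \<noteq> lam2 \<longrightarrow> (\<exists>j\<in>{1..n}. Y lam1 j \<noteq> Y lam2 j)))"
proof -
  let ?Y = "\<lambda>lam. ratfun.solution N n (Iidx n lam)"
  have index: "Iidx n lam ` {1..n} \<subseteq> {1..N}" "inj_on (Iidx n lam) {1..n}"
    if "lam \<in> box_partitions n k" for lam
    using Iidx_range[OF that] inj_on_Iidx[OF that] assms by auto
  have coeffs: "ratfun_in N (?Y lam j $ m)" if "lam \<in> box_partitions n k" "j \<in> {1..n}" for lam j m
    by (rule ratfun.solution_coeffs_in[OF ratfun_in.subfield_predicate_axioms ratfun_in_beta _
          index(1)[OF that(1)] that(2)]) (simp add: ratfun_in_tt)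
  have distinct: "\<exists>j\<in>{1..n}. ?Y lam j \<noteq> ?Y mu j"
    if "lam \<in> box_partitions n k" "mu \<in> box_partitions n k" "lam \<noteq> mu" for lam mu
    using Iidx_eq_imp_eq[OF that(1,2)] that(3) inj_tt ratfun.solution_nth_0 by (metis injD)
  show ?thesis
    using assms box_partitions_card_finite coeffs distinct
      ratfun.solution_solves[OF index(1)] ratfun.solution_first_order[OF index]
    unfolding ratfun.bethe_lhs_def Iset_def
    by (intro conjI exI[of _ ?Y] ballI allI impI) (simp_all add: ratfun.solution_nth_0)
qed

end
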